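(* Let $M$ be a generic structure for the class $\mathcal{C}$ (as described in the context), and let $\bar a,\bar b$ be tuples of $M$ enumerating strong substructures of the same type over $\emptyset$. If $tp(\bar a/N)=tp(\bar b/N)$ for some elementary substructure $N\preceq M$, then for every pair of subtuples $\bar a'\subseteq\bar a$, $\bar b'\subseteq\bar b$ of length $l$ occupying the same places in $\bar a$ and $\bar b$, $$(\bar a'\le_l\bar b'<_l f(\bar a'))\vee(\bar b'\le_l\bar a'<_l f(\bar b')).$$
   Context: Let $L=\{E_n,K_n,R_n : 2<n<\omega\}$ be a relational language, where $E_n$ and $R_n$ have arity $2n$ and $K_n$ has arity $3n$. All these relations hold only on tuples whose $n$-blocks consist of $n$ distinct elements, and their truth depends only on the underlying $n$-element sets of the blocks. Let $K$ be the class of finite $L$-structures $C$ such that for each $n$: (1) $E_n$ is an equivalence relation on the set ${C\choose n}$ of $n$-element subsets of $C$; (2) $R_n$ is irreflexive, respects $E_n$, and induces a partial injective function on ${C\choose n}/E_n$; (3) $K_n$ respects $E_n$ in each argument and induces a circular order on ${C\choose n}/E_n$; (4) $R_n(\bar x,\bar y)\wedge R_n(\bar y,\bar z)\to K_n(\bar x,\bar y,\bar z)$, and if $R_n(\bar v_i,\bar w_i)$ for $i=1,2,3$ then $K_n(\bar v_1,\bar v_2,\bar v_3)\leftrightarrow K_n(\bar w_1,\bar w_2,\bar w_3)$; (5) the partial function induced by $R_n$ extends to an injective function $f$ on some larger domain such that $f^n$ is the identity on its domain but $f^m(V)\ne V$ for every $V\in{C\choose n}/E_n$ and $0<m<n$.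 A structure $A\in K$ is strong if for every $n$, either all elements of ${A\choose n}$ are pairwise $E_n$-equivalent, or every $\bar a\in{A\choose n}$ lies in an $R_n$-cycle: a sequence $\bar a_1=\bar a,\dots,\bar a_n$ of pairwise non-$E_n$-equivalent elements of ${A\choose n}$ with $R_n(\bar a_i,\bar a_{i+1})$ for $i<n$ and $R_n(\bar a_n,\bar a_1)$. Let $\mathcal{C}$ be the class of strong structures in $K$. A countable $L$-structure $M$ is generic for $\mathcal{C}$ if: $\mathcal{C}$ is exactly the class of finite substructures of $M$ that belong to $\mathcal{C}$ (strong substructures); $M$ is the union of a chain of strong finite substructures; and whenever $A\subseteq M$ is a strong finite substructure and $A\subseteq B\in\mathcal{C}$, $B$ embeds into $M$ over $A$. Such $M$ exists, is $\aleph_0$-categorical, and every isomorphism between strong finite substructures of $M$ extends to an automorphism. Notation: $\bar a<_n\bar b<_n\bar c$ means $K_n(\bar a,\bar b,\bar c)$; $\le_n$ is its version allowing equality of $E_n$-classes; $f(\bar c)$ denotes some (any) $\bar c'$ with $R_n(\bar c,\bar c')$, where $n$ is the length of $\bar c$. *)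

theory Defs
  imports Main "HOL-Library.Countable_Set"
begin

text \<open>Relation symbols E_n, K_n, R_n. Only n > 2 is part of the language; an
L-structure interprets symbols with n \<le> 2 as empty (see Lstruct).\<close>

datatype sym = Esym nat | Ksym nat | Rsym nat

fun bsize :: "sym \<Rightarrow> nat" where
  "bsize (Esym n) = n" | "bsize (Ksym n) = n" | "bsize (Rsym n) = n"

fun bcount :: "sym \<Rightarrow> nat" where
  "bcount (Esym n) = 2" | "bcount (Ksym n) = 3" | "bcount (Rsym n) = 2"

definition block :: "nat \<Rightarrow> nat \<Rightarrow> 'a list \<Rightarrow> 'a list" where
  "block n j xs = take n (drop (j * n) xs)"

definition block_ok :: "sym \<Rightarrow> 'a list \<Rightarrow> bool" where
  "block_ok s xs \<longleftrightarrow> length xs = bcount s * bsize s \<and>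
     (\<forall>j < bcount s. distinct (block (bsize s) j xs))"

definition same_blocks :: "sym \<Rightarrow> 'a list \<Rightarrow> 'a list \<Rightarrow> bool" where
  "same_blocks s xs ys \<longleftrightarrow>
     (\<forall>j < bcount s. set (block (bsize s) j xs) = set (block (bsize s) j ys))"

definition Lstruct :: "'a set \<Rightarrow> (sym \<Rightarrow> 'a list \<Rightarrow> bool) \<Rightarrow> bool" where
  "Lstruct U I \<longleftrightarrow> U \<noteq> {} \<and>
     (\<forall>s xs. I s xs \<longrightarrow> set xs \<subseteq> U \<and> 2 < bsize s \<and> block_ok s xs) \<and>
     (\<forall>s xs ys. block_ok s xs \<longrightarrow> block_ok s ys \<longrightarrow> same_blocks s xs ys \<longrightarrow>
        I s xs = I s ys)"

definition nsets :: "'a set \<Rightarrow> nat \<Rightarrow> 'a set set" where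
  "nsets A n = {X. X \<subseteq> A \<and> card X = n}"

definition rel2 :: "(sym \<Rightarrow> 'a list \<Rightarrow> bool) \<Rightarrow> sym \<Rightarrow> 'a set \<Rightarrow> 'a set \<Rightarrow> bool" where
  "rel2 I s X Y \<longleftrightarrow> (\<exists>x y. distinct x \<and> distinct y \<and> set x = X \<and> set y = Y \<and> I s (x @ y))"

definition rel3 :: "(sym \<Rightarrow> 'a list \<Rightarrow> bool) \<Rightarrow> sym \<Rightarrow> 'a set \<Rightarrow> 'a set \<Rightarrow> 'a set \<Rightarrow> bool" where
  "rel3 I s X Y Z \<longleftrightarrow> (\<exists>x y z. distinct x \<and> distinct y \<and> distinct z \<and>
      set x = X \<and> set y = Y \<and> set z = Z \<and> I s (x @ y @ z))"

definition Ecls :: "(sym \<Rightarrow> 'a list \<Rightarrow> bool) \<Rightarrow> 'a set \<Rightarrow> nat \<Rightarrow> 'a set \<Rightarrow> 'a set set" where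
  "Ecls I A n X = {Y \<in> nsets A n. rel2 I (Esym n) X Y}"

definition condK :: "(sym \<Rightarrow> 'a list \<Rightarrow> bool) \<Rightarrow> 'a set \<Rightarrow> nat \<Rightarrow> bool" where
  "condK I A n \<longleftrightarrow>
    (let S = nsets A n; E = rel2 I (Esym n); R = rel2 I (Rsym n); K = rel3 I (Ksym n);
         Q = Ecls I A n ` S;
         Rc = (\<lambda>V W. \<exists>X\<in>V. \<exists>Y\<in>W. R X Y) in
     \<comment> \<open>(1) E_n is an equivalence relation on S\<close>
     (\<forall>X\<in>S. E X X) \<and>
     (\<forall>X\<in>S. \<forall>Y\<in>S. E X Y \<longrightarrow> E Y X) \<and>
     (\<forall>X\<in>S. \<forall>Y\<in>S. \<forall>Z\<in>S. E X Y \<longrightarrow> E Y Z \<longrightarrow> E X Z) \<and>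
     \<comment> \<open>(2) R_n irreflexive, respects E_n, partial injective function on classes\<close>
     (\<forall>X\<in>S. \<not> R X X) \<and>
     (\<forall>X\<in>S. \<forall>X'\<in>S. \<forall>Y\<in>S. \<forall>Y'\<in>S. E X X' \<longrightarrow> E Y Y' \<longrightarrow> R X Y \<longrightarrow> R X' Y') \<and>
     (\<forall>X\<in>S. \<forall>Y\<in>S. \<forall>Z\<in>S. R X Y \<longrightarrow> R X Z \<longrightarrow> E Y Z) \<and>
     (\<forall>X\<in>S. \<forall>Y\<in>S. \<forall>Z\<in>S. R X Z \<longrightarrow> R Y Z \<longrightarrow> E X Y) \<and>
     \<comment> \<open>(3) K_n respects E_n in each argument and is a circular order on classes\<close>
     (\<forall>X\<in>S. \<forall>X'\<in>S. \<forall>Y\<in>S. \<forall>Y'\<in>S. \<forall>Z\<in>S. \<forall>Z'\<in>S.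
        E X X' \<longrightarrow> E Y Y' \<longrightarrow> E Z Z' \<longrightarrow> K X Y Z \<longrightarrow> K X' Y' Z') \<and>
     (\<forall>X\<in>S. \<forall>Y\<in>S. \<forall>Z\<in>S. K X Y Z \<longrightarrow> K Y Z X) \<and>
     (\<forall>X\<in>S. \<forall>Y\<in>S. \<forall>Z\<in>S. K X Y Z \<longrightarrow> \<not> K Z Y X) \<and>
     (\<forall>X\<in>S. \<forall>Y\<in>S. \<forall>Z\<in>S. \<forall>W\<in>S. K X Y Z \<longrightarrow> K X Z W \<longrightarrow> K X Y W) \<and>
     (\<forall>X\<in>S. \<forall>Y\<in>S. \<forall>Z\<in>S. \<not> E X Y \<longrightarrow> \<not> E Y Z \<longrightarrow> \<not> E X Z \<longrightarrow> K X Y Z \<or> K Z Y X) \<and>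
     \<comment> \<open>(4)\<close>
     (\<forall>X\<in>S. \<forall>Y\<in>S. \<forall>Z\<in>S. R X Y \<longrightarrow> R Y Z \<longrightarrow> K X Y Z) \<and>
     (\<forall>V1\<in>S. \<forall>W1\<in>S. \<forall>V2\<in>S. \<forall>W2\<in>S. \<forall>V3\<in>S. \<forall>W3\<in>S.
        R V1 W1 \<longrightarrow> R V2 W2 \<longrightarrow> R V3 W3 \<longrightarrow> (K V1 V2 V3 \<longleftrightarrow> K W1 W2 W3)) \<and>
     \<comment> \<open>(5) the induced partial function on classes extends to an injective f on a
         larger domain D with f^n = id on D and no class of period m with 0 < m < n\<close>
     (\<exists>(D :: ('a set set + nat) set) f.
        Inl ` Q \<subseteq> D \<and> f ` D \<subseteq> D \<and> inj_on f D \<and>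
        (\<forall>V\<in>D. (f ^^ n) V = V) \<and>
        (\<forall>V\<in>Q. \<forall>m. 0 < m \<and> m < n \<longrightarrow> (f ^^ m) (Inl V) \<noteq> Inl V) \<and>
        (\<forall>V\<in>Q. \<forall>W\<in>Q. Rc V W \<longrightarrow> f (Inl V) = Inl W)))"

definition inK :: "(sym \<Rightarrow> 'a list \<Rightarrow> bool) \<Rightarrow> 'a set \<Rightarrow> bool" where
  "inK I A \<longleftrightarrow> finite A \<and> (\<forall>n. 2 < n \<longrightarrow> condK I A n)"

definition in_Rcycle :: "(sym \<Rightarrow> 'a list \<Rightarrow> bool) \<Rightarrow> 'a set \<Rightarrow> nat \<Rightarrow> 'a set \<Rightarrow> bool" where
  "in_Rcycle I A n X \<longleftrightarrow> (\<exists>xs :: 'a set list. length xs = n \<and> xs ! 0 = X \<and>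
      set xs \<subseteq> nsets A n \<and>
      (\<forall>i<n. \<forall>j<n. i \<noteq> j \<longrightarrow> \<not> rel2 I (Esym n) (xs ! i) (xs ! j)) \<and>
      (\<forall>i. i + 1 < n \<longrightarrow> rel2 I (Rsym n) (xs ! i) (xs ! (i + 1))) \<and>
      rel2 I (Rsym n) (xs ! (n - 1)) (xs ! 0))"

text \<open>Strong finite structures (the class C); A is the universe, relations are I restricted to A.\<close>

definition strong :: "(sym \<Rightarrow> 'a list \<Rightarrow> bool) \<Rightarrow> 'a set \<Rightarrow> bool" where
  "strong I A \<longleftrightarrow> inK I A \<and>
     (\<forall>n. 2 < n \<longrightarrow>
        (\<forall>X\<in>nsets A n. \<forall>Y\<in>nsets A n. rel2 I (Esym n) X Y) \<or>
        (\<forall>X\<in>nsets A n. in_Rcycle I A n X))"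

definition embedding :: "'b set \<Rightarrow> (sym \<Rightarrow> 'b list \<Rightarrow> bool) \<Rightarrow> 'a set \<Rightarrow>
    (sym \<Rightarrow> 'a list \<Rightarrow> bool) \<Rightarrow> ('b \<Rightarrow> 'a) \<Rightarrow> bool" where
  "embedding B IB U I h \<longleftrightarrow> inj_on h B \<and> h ` B \<subseteq> U \<and>
     (\<forall>s xs. set xs \<subseteq> B \<longrightarrow> (IB s xs \<longleftrightarrow> I s (map h xs)))"

definition generic :: "'a set \<Rightarrow> (sym \<Rightarrow> 'a list \<Rightarrow> bool) \<Rightarrow> bool" where
  "generic U I \<longleftrightarrow> countable U \<and> Lstruct U I \<and>
    \<comment> \<open>every member of C (up to isomorphism) is a substructure of M\<close>
    (\<forall>(B :: nat set) IB. Lstruct B IB \<longrightarrow> strong IB B \<longrightarrow> (\<exists>h. embedding B IB U I h)) \<and>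
    \<comment> \<open>M is the union of a chain of strong finite substructures\<close>
    (\<exists>C :: nat \<Rightarrow> 'a set. (\<forall>k. C k \<subseteq> C (Suc k) \<and> C k \<subseteq> U \<and> strong I (C k)) \<and>
        (\<Union>k. C k) = U) \<and>
    \<comment> \<open>extension property over strong finite substructures\<close>
    (\<forall>A (B :: ('a + nat) set) IB. A \<subseteq> U \<longrightarrow> strong I A \<longrightarrow>
        Lstruct B IB \<longrightarrow> strong IB B \<longrightarrow> Inl ` A \<subseteq> B \<longrightarrow>
        (\<forall>s xs. set xs \<subseteq> A \<longrightarrow> (IB s (map Inl xs) \<longleftrightarrow> I s xs)) \<longrightarrow>
        (\<exists>h. embedding B IB U I h \<and> (\<forall>a\<in>A. h (Inl a) = a)))"

datatype fm = Atom sym "nat list" | Eq nat nat | Neg fm | Conj fm fm | Ex nat fm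

fun sat :: "'a set \<Rightarrow> (sym \<Rightarrow> 'a list \<Rightarrow> bool) \<Rightarrow> (nat \<Rightarrow> 'a) \<Rightarrow> fm \<Rightarrow> bool" where
  "sat U I v (Atom s xs) = I s (map v xs)"
| "sat U I v (Eq x y) = (v x = v y)"
| "sat U I v (Neg \<phi>) = (\<not> sat U I v \<phi>)"
| "sat U I v (Conj \<phi> \<psi>) = (sat U I v \<phi> \<and> sat U I v \<psi>)"
| "sat U I v (Ex x \<phi>) = (\<exists>a\<in>U. sat U I (v(x := a)) \<phi>)"

fun fv :: "fm \<Rightarrow> nat set" where
  "fv (Atom s xs) = set xs"
| "fv (Eq x y) = {x, y}"
| "fv (Neg \<phi>) = fv \<phi>"
| "fv (Conj \<phi> \<psi>) = fv \<phi> \<union> fv \<psi>"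
| "fv (Ex x \<phi>) = fv \<phi> - {x}"

definition asg :: "'a list \<Rightarrow> (nat \<Rightarrow> 'a) \<Rightarrow> nat \<Rightarrow> 'a" where
  "asg a v i = (if i < length a then a ! i else v i)"

definition same_type :: "'a set \<Rightarrow> (sym \<Rightarrow> 'a list \<Rightarrow> bool) \<Rightarrow> 'a set \<Rightarrow> 'a list \<Rightarrow> 'a list \<Rightarrow> bool" where
  "same_type U I P a b \<longleftrightarrow> length a = length b \<and>
     (\<forall>\<phi> v. range v \<subseteq> U \<longrightarrow> (\<forall>i\<in>fv \<phi>. length a \<le> i \<longrightarrow> v i \<in> P) \<longrightarrow>
        (sat U I (asg a v) \<phi> \<longleftrightarrow> sat U I (asg b v) \<phi>))"

definition elem_sub :: "'a set \<Rightarrow> 'a set \<Rightarrow> (sym \<Rightarrow> 'a list \<Rightarrow> bool) \<Rightarrow> bool" where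
  "elem_sub N U I \<longleftrightarrow> N \<subseteq> U \<and> N \<noteq> {} \<and>
     (\<forall>\<phi> v. range v \<subseteq> N \<longrightarrow> (sat N I v \<phi> \<longleftrightarrow> sat U I v \<phi>))"

definition le_lt :: "(sym \<Rightarrow> 'a list \<Rightarrow> bool) \<Rightarrow> nat \<Rightarrow> 'a list \<Rightarrow> 'a list \<Rightarrow> 'a list \<Rightarrow> bool" where
  "le_lt I n x y z \<longleftrightarrow> I (Ksym n) (x @ y @ z) \<or> (I (Esym n) (x @ y) \<and> \<not> I (Esym n) (y @ z))"

end

(* In a strong structure R_l permutes the E_l-classes of l-sets in cycles of length l, and every
   finite part of the generic M lies in a strong substructure. So every l-tuple of M has an
   R_l-successor; this is first-order, hence the elementary substructure N contains an R_l-path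
   z_0, ..., z_l, which winds exactly once around the circular order K_l: z_l E_l z_0.
   Some interval z_i <= a' < z_(i+1) of this path contains a'; it is defined over N, so by
   tp(a/N) = tp(b/N) it contains b' as well. Finally f is an automorphism of the circular order
   carrying [W, f W) onto [f W, f f W), and this forces any two tuples x, y of one interval
   [W, f W) to satisfy x <= y < f x or y <= x < f y. *)

theory Submission
  imports Defs
begin

section \<open>Circular orders with a successor relation\<close>

definition circ_le_lt :: "('s \<Rightarrow> 's \<Rightarrow> bool) \<Rightarrow> ('s \<Rightarrow> 's \<Rightarrow> 's \<Rightarrow> bool) \<Rightarrow> 's \<Rightarrow> 's \<Rightarrow> 's \<Rightarrow> bool" where
  "circ_le_lt E K X Y Z \<longleftrightarrow> K X Y Z \<or> (E X Y \<and> \<not> E Y Z)"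

locale circ_order =
  fixes S :: "'s set" and E :: "'s \<Rightarrow> 's \<Rightarrow> bool" and K :: "'s \<Rightarrow> 's \<Rightarrow> 's \<Rightarrow> bool"
  assumes E_refl: "X \<in> S \<Longrightarrow> E X X"
    and E_sym: "X \<in> S \<Longrightarrow> Y \<in> S \<Longrightarrow> E X Y \<Longrightarrow> E Y X"
    and E_trans: "X \<in> S \<Longrightarrow> Y \<in> S \<Longrightarrow> Z \<in> S \<Longrightarrow> E X Y \<Longrightarrow> E Y Z \<Longrightarrow> E X Z"
    and K_cong: "X \<in> S \<Longrightarrow> X' \<in> S \<Longrightarrow> Y \<in> S \<Longrightarrow> Y' \<in> S \<Longrightarrow> Z \<in> S \<Longrightarrow> Z' \<in> S \<Longrightarrow>
      E X X' \<Longrightarrow> E Y Y' \<Longrightarrow> E Z Z' \<Longrightarrow> K X Y Z \<Longrightarrow> K X' Y' Z'"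
    and K_cycle: "X \<in> S \<Longrightarrow> Y \<in> S \<Longrightarrow> Z \<in> S \<Longrightarrow> K X Y Z \<Longrightarrow> K Y Z X"
    and K_asym: "X \<in> S \<Longrightarrow> Y \<in> S \<Longrightarrow> Z \<in> S \<Longrightarrow> K X Y Z \<Longrightarrow> \<not> K Z Y X"
    and K_trans: "X \<in> S \<Longrightarrow> Y \<in> S \<Longrightarrow> Z \<in> S \<Longrightarrow> W \<in> S \<Longrightarrow> K X Y Z \<Longrightarrow> K X Z W \<Longrightarrow> K X Y W"
    and K_total: "X \<in> S \<Longrightarrow> Y \<in> S \<Longrightarrow> Z \<in> S \<Longrightarrow>
      \<not> E X Y \<Longrightarrow> \<not> E Y Z \<Longrightarrow> \<not> E X Z \<Longrightarrow> K X Y Z \<or> K Z Y X"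
begin

abbreviation lelt :: "'s \<Rightarrow> 's \<Rightarrow> 's \<Rightarrow> bool" where
  "lelt \<equiv> circ_le_lt E K"

lemma K_not_E:
  assumes S: "X \<in> S" "Y \<in> S" "Z \<in> S" and K: "K X Y Z"
  shows "\<not> E X Y" and "\<not> E Y Z" and "\<not> E X Z"
proof -
  have no_return: "\<not> K A B A" if "A \<in> S" "B \<in> S" for A B
    using K_asym that by blast
  show "\<not> E X Y"
  proof
    assume "E X Y"
    then have "K Y Y Z"
      using K_cong[OF S(1,2,2,2,3,3)] K S E_refl by simp
    then show False
      using K_cycle[of Y Y Z] no_return[of Y Z] S by simp
  qed
  show "\<not> E Y Z"
  proof
    assume "E Y Z"
    then have "K X Z Z"
      using K_cong[OF S(1,1,2,3,3,3)] K S E_refl by simp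
    then show False
      using K_cycle[of X Z Z] K_cycle[of Z Z X] no_return[of Z X] S by simp
  qed
  show "\<not> E X Z"
  proof
    assume "E X Z"
    then have "K X Y X"
      using K_cong[OF S(1,1,2,2,3,1)] K S E_refl E_sym by simp
    then show False
      using no_return[of X Y] S by simp
  qed
qed

lemma K_shift:
  assumes S: "X \<in> S" "Y \<in> S" "Z \<in> S" "W \<in> S" and K: "K X Y Z" "K X Z W"
  shows "K Y Z W"
proof -
  have not_XZY: "\<not> K X Z Y"
    using K_asym[OF S(1,2,3) K(1)] K_cycle[OF S(1,3,2)] by blast
  have "\<not> E Y W"
  proof
    assume "E Y W"
    then have "K X Z Y"
      using K_cong[OF S(1,1,3,3,4,2)] K(2) S E_refl E_sym by simp
    with not_XZY show False ..
  qed
  moreover have "\<not> E Y Z" "\<not> E Z W"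
    using K_not_E(2)[OF S(1,2,3) K(1)] K_not_E(2)[OF S(1,3,4) K(2)] .
  ultimately have "K Y Z W \<or> K W Z Y"
    using K_total[OF S(2,3,4)] by blast
  moreover have "\<not> K W Z Y"
  proof
    assume "K W Z Y"
    then have "K Z Y X"
      using K_trans[OF S(3,2,4,1)] K_cycle[OF S(4,3,2)] K_cycle[OF S(1,3,4) K(2)] by blast
    then show False
      using not_XZY K_cycle[OF S(3,2,1)] K_cycle[OF S(2,1,3)] by blast
  qed
  ultimately show ?thesis
    by blast
qed

lemma lelt_cong:
  assumes S: "X \<in> S" "Y \<in> S" "Z \<in> S" "X' \<in> S" "Y' \<in> S" "Z' \<in> S"
    and E: "E X X'" "E Y Y'" "E Z Z'" and "lelt X Y Z"
  shows "lelt X' Y' Z'"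
proof -
  have "E X' Y'" if "E X Y"
    using E_trans[OF S(4,1,5)] E_sym[OF S(1,4) E(1)] E_trans[OF S(1,2,5) that E(2)] by blast
  moreover have "E Y Z" if "E Y' Z'"
    using E_trans[OF S(2,5,3) E(2)] E_trans[OF S(5,6,3) that] E_sym[OF S(3,6) E(3)] by blast
  ultimately show ?thesis
    using K_cong[OF S(1,4,2,5,3,6) E] \<open>lelt X Y Z\<close> unfolding circ_le_lt_def by blast
qed

lemma lelt_total:
  assumes S: "X \<in> S" "Y \<in> S" "Z \<in> S" and "\<not> E X Z"
  shows "lelt X Y Z \<or> lelt Z Y X"
proof (cases "E X Y \<or> E Z Y")
  case True
  then show ?thesis
    using assms E_sym E_trans unfolding circ_le_lt_def by metis
next
  case False
  then show ?thesis
    using K_total[OF S] assms E_sym[OF S(2,3)] unfolding circ_le_lt_def by blast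
qed

lemma lelt_split:
  assumes S: "X \<in> S" "Y \<in> S" "Z \<in> S" "W \<in> S" and "lelt X Y W"
  shows "lelt X Y Z \<or> lelt Z Y W"
proof (cases "E X Z \<or> E Z W")
  case True
  then show ?thesis
    using lelt_cong[OF S(1,2,4,3,2,4) _ E_refl E_refl] lelt_cong[OF S(1,2,4,1,2,3) E_refl E_refl]
      \<open>lelt X Y W\<close> E_sym[OF S(3,4)] S by blast
next
  case False
  then have XZ: "\<not> E X Z" and ZW: "\<not> E Z W"
    by auto
  show ?thesis
  proof (cases "E X Y \<or> E Y Z")
    case True
    then show ?thesis
      using XZ ZW E_trans[OF S(1,2,3)] E_trans[OF S(3,2,4)] E_sym[OF S(2,3)] unfolding circ_le_lt_def by blast
  next
    case False
    then have "K X Y W"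
      using \<open>lelt X Y W\<close> unfolding circ_le_lt_def by blast
    have "K Z Y W" if "K Z Y X"
    proof -
      have "K Y W Z"
        using K_trans[OF S(2,4,1,3)] K_cycle[OF S(1,2,4) \<open>K X Y W\<close>] K_cycle[OF S(3,2,1) that] by blast
      then show ?thesis
        using K_cycle[OF S(2,4,3)] K_cycle[OF S(4,3,2)] by blast
    qed
    then show ?thesis
      using K_total[OF S(1,2,3)] False XZ unfolding circ_le_lt_def by blast
  qed
qed

lemma lelt_chain:
  assumes "\<And>i. i \<le> n \<Longrightarrow> p i \<in> S" and "Y \<in> S" and "m < n" and "lelt (p m) Y (p n)"
  shows "\<exists>i. m \<le> i \<and> i < n \<and> lelt (p i) Y (p (Suc i))"
  using assms
proof (induction n)
  case 0
  then show ?case by simp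
next
  case (Suc n)
  show ?case
  proof (cases "m = n")
    case True
    then show ?thesis
      using Suc.prems by auto
  next
    case False
    then have "m < n"
      using Suc.prems by simp
    then have "lelt (p m) Y (p n) \<or> lelt (p n) Y (p (Suc n))"
      using lelt_split Suc.prems by simp
    then show ?thesis
    proof
      assume "lelt (p m) Y (p n)"
      then obtain i where "m \<le> i" "i < n" "lelt (p i) Y (p (Suc i))"
        using Suc.IH Suc.prems \<open>m < n\<close> by auto
      then show ?thesis
        by (intro exI[of _ i]) simp
    next
      assume "lelt (p n) Y (p (Suc n))"
      then show ?thesis
        using \<open>m < n\<close> by (intro exI[of _ n]) simp
    qed
  qed
qed

lemma lelt_cover:
  assumes p_in: "\<And>i. i \<le> n \<Longrightarrow> p i \<in> S" and "Y \<in> S" and "1 < n"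
    and "E (p n) (p 0)" and "\<not> E (p 0) (p 1)"
  shows "\<exists>i<n. lelt (p i) Y (p (Suc i))"
proof -
  have S: "p 0 \<in> S" "p 1 \<in> S" "p n \<in> S"
    using p_in \<open>1 < n\<close> by auto
  consider "lelt (p 0) Y (p 1)" | "lelt (p 1) Y (p 0)"
    using lelt_total[OF S(1) \<open>Y \<in> S\<close> S(2)] assms(5) by blast
  then show ?thesis
  proof cases
    case 1
    then show ?thesis
      using \<open>1 < n\<close> by (intro exI[of _ 0]) simp
  next
    case 2
    then have "lelt (p 1) Y (p n)"
      using lelt_cong[OF S(2) \<open>Y \<in> S\<close> S(1,2) \<open>Y \<in> S\<close> S(3)] E_refl E_sym[OF S(3,1)] assms(4) S \<open>Y \<in> S\<close>
      by blast
    then show ?thesis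
      using lelt_chain[of n p Y 1] p_in \<open>Y \<in> S\<close> \<open>1 < n\<close> by auto
  qed
qed

end

text \<open>\<open>R\<close> is the graph of the paper's successor map \<open>f\<close>, determined only up to \<open>E\<close>.\<close>

locale circ_succ = circ_order S E K
  for S :: "'s set" and E :: "'s \<Rightarrow> 's \<Rightarrow> bool" and K :: "'s \<Rightarrow> 's \<Rightarrow> 's \<Rightarrow> bool" +
  fixes R :: "'s \<Rightarrow> 's \<Rightarrow> bool"
  assumes R_irrefl: "X \<in> S \<Longrightarrow> \<not> R X X"
    and R_cong: "X \<in> S \<Longrightarrow> X' \<in> S \<Longrightarrow> Y \<in> S \<Longrightarrow> Y' \<in> S \<Longrightarrow>
      E X X' \<Longrightarrow> E Y Y' \<Longrightarrow> R X Y \<Longrightarrow> R X' Y'"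
    and R_functional: "X \<in> S \<Longrightarrow> Y \<in> S \<Longrightarrow> Z \<in> S \<Longrightarrow> R X Y \<Longrightarrow> R X Z \<Longrightarrow> E Y Z"
    and R_injective: "X \<in> S \<Longrightarrow> Y \<in> S \<Longrightarrow> Z \<in> S \<Longrightarrow> R X Z \<Longrightarrow> R Y Z \<Longrightarrow> E X Y"
    and R_K: "X \<in> S \<Longrightarrow> Y \<in> S \<Longrightarrow> Z \<in> S \<Longrightarrow> R X Y \<Longrightarrow> R Y Z \<Longrightarrow> K X Y Z"
    and R_preserves_K: "X \<in> S \<Longrightarrow> X' \<in> S \<Longrightarrow> Y \<in> S \<Longrightarrow> Y' \<in> S \<Longrightarrow> Z \<in> S \<Longrightarrow> Z' \<in> S \<Longrightarrow>
      R X X' \<Longrightarrow> R Y Y' \<Longrightarrow> R Z Z' \<Longrightarrow> K X Y Z \<longleftrightarrow> K X' Y' Z'"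
    and R_total: "X \<in> S \<Longrightarrow> \<exists>Y\<in>S. R X Y"
begin

lemma R_not_E:
  assumes "X \<in> S" "Y \<in> S" "R X Y"
  shows "\<not> E X Y"
  using R_cong[of X X Y X] R_irrefl E_refl E_sym assms by blast

lemma E_iff_E_succ:
  assumes S: "X \<in> S" "Y \<in> S" "X' \<in> S" "Y' \<in> S" and R: "R X X'" "R Y Y'"
  shows "E X Y \<longleftrightarrow> E X' Y'"
proof
  assume "E X Y"
  then have "R Y X'"
    using R_cong[OF S(1,2,3,3)] R(1) E_refl[OF S(3)] by blast
  then show "E X' Y'"
    using R_functional[OF S(2,3,4)] R(2) by blast
next
  assume "E X' Y'"
  then have "R X Y'"
    using R_cong[OF S(1,1,3,4)] R(1) E_refl[OF S(1)] by blast
  then show "E X Y"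
    using R_injective[OF S(1,2,4)] R(2) by blast
qed

lemma lelt_succ:
  assumes S: "X \<in> S" "Y \<in> S" "Z \<in> S" "X' \<in> S" "Y' \<in> S" "Z' \<in> S"
    and R: "R X X'" "R Y Y'" "R Z Z'" and "lelt X Y Z"
  shows "lelt X' Y' Z'"
  using \<open>lelt X Y Z\<close> R_preserves_K[OF S(1,4,2,5,3,6) R] E_iff_E_succ[OF S(1,2,4,5) R(1,2)]
    E_iff_E_succ[OF S(2,3,5,6) R(2,3)]
  unfolding circ_le_lt_def by blast

lemma R_path_returns:
  assumes cyc: "length cs = n" "0 < n" "set cs \<subseteq> S" "cs ! 0 = p 0"
      "\<And>i. Suc i < n \<Longrightarrow> R (cs ! i) (cs ! Suc i)" "R (cs ! (n - 1)) (cs ! 0)"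
    and path: "\<And>i. i \<le> n \<Longrightarrow> p i \<in> S" "\<And>i. i < n \<Longrightarrow> R (p i) (p (Suc i))"
  shows "E (p n) (p 0)"
proof -
  have cs_in: "cs ! i \<in> S" if "i < n" for i
    using cyc(1,3) that by auto
  have follows: "E (p i) (cs ! i)" if "i < n" for i
    using that
  proof (induction i)
    case 0
    then show ?case
      using cyc(4) path(1) E_refl by simp
  next
    case (Suc i)
    then have "R (cs ! i) (p (Suc i))"
      using R_cong[of "p i" "cs ! i" "p (Suc i)" "p (Suc i)"] path cs_in E_refl by simp
    then have "E (cs ! Suc i) (p (Suc i))"
      using R_functional[of "cs ! i"] cyc(5) path(1) cs_in Suc.prems by simp
    then show ?case
      using E_sym path(1) cs_in Suc.prems by simp
  qed
  have "R (cs ! (n - 1)) (p n)"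
    using R_cong[of "p (n - 1)" "cs ! (n - 1)" "p n" "p n"] follows[of "n - 1"] path(2)[of "n - 1"]
      path(1) cs_in E_refl \<open>0 < n\<close>
    by simp
  then have "E (cs ! 0) (p n)"
    using R_functional[of "cs ! (n - 1)"] cyc(6) path(1) cs_in \<open>0 < n\<close> by simp
  then show ?thesis
    using E_sym path(1) cs_in cyc(4) \<open>0 < n\<close> by simp
qed

text \<open>Applying \<open>R\<close> to \<open>W \<le> X < FW\<close> gives \<open>FW \<le> FX < R FW\<close>, so, seen from \<open>W\<close>, \<open>FX\<close> does
  not come before \<open>FW\<close>; hence \<open>X < Y < FW \<le> FX\<close>.\<close>

lemma lelt_same_interval_ordered:
  assumes S: "W \<in> S" "FW \<in> S" "X \<in> S" "FX \<in> S" "Y \<in> S" and R: "R W FW" "R X FX"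
    and "lelt W X FW" "lelt W Y FW" and "K W X Y \<or> E W X" and "\<not> E X Y"
  shows "lelt X Y FX"
proof (cases "E W X")
  case True
  then have "E FW FX"
    using E_iff_E_succ[OF S(1,3,2,4) R] by blast
  then show ?thesis
    using lelt_cong[OF S(1,5,2,3,5,4) True E_refl[OF S(5)]] \<open>lelt W Y FW\<close> by blast
next
  case False
  then have WXY: "K W X Y"
    using \<open>K W X Y \<or> E W X\<close> by blast
  obtain FFW where FFW: "FFW \<in> S" "R FW FFW"
    using R_total[OF S(2)] by blast
  have WYFW: "K W Y FW"
    using \<open>lelt W Y FW\<close> K_not_E(3)[OF S(1,3,5) WXY] unfolding circ_le_lt_def by blast
  have "lelt FW FX FFW"
    using lelt_succ[OF S(1,3,2,2,4) FFW(1) R(1,2) FFW(2) \<open>lelt W X FW\<close>] .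
  have "K W FW FX \<or> E FW FX"
  proof (rule disjCI)
    assume "\<not> E FW FX"
    then have "K FW FX FFW"
      using \<open>lelt FW FX FFW\<close> unfolding circ_le_lt_def by blast
    moreover have "K FW FFW W"
      using R_K[OF S(1,2) FFW(1) R(1) FFW(2)] K_cycle[OF S(1,2) FFW(1)] by blast
    ultimately show "K W FW FX"
      using K_trans[OF S(2,4) FFW(1) S(1)] K_cycle[OF S(2,4,1)] K_cycle[OF S(4,1,2)] by blast
  qed
  then have "K W Y FX"
    using K_trans[OF S(1,5,2,4) WYFW] K_cong[OF S(1,1,5,5,2,4) E_refl[OF S(1)] E_refl[OF S(5)] _ WYFW]
    by blast
  then show ?thesis
    using K_shift[OF S(1,3,5,4) WXY] unfolding circ_le_lt_def by blast
qed

lemma lelt_same_interval: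
  assumes S: "W \<in> S" "FW \<in> S" "X \<in> S" "FX \<in> S" "Y \<in> S" "FY \<in> S"
    and R: "R W FW" "R X FX" "R Y FY" and "lelt W X FW" "lelt W Y FW"
  shows "lelt X Y FX \<or> lelt Y X FY"
proof (cases "E X Y")
  case True
  have "\<not> E Y FX"
    using E_trans[OF S(3,5,4) True] R_not_E[OF S(3,4) R(2)] by blast
  then show ?thesis
    using True unfolding circ_le_lt_def by blast
next
  case False
  show ?thesis
  proof (cases "K W X Y \<or> E W X")
    case True
    then show ?thesis
      using lelt_same_interval_ordered[OF S(1-5) R(1,2) assms(10,11) _ False] by blast
  next
    case WXY: False
    have "K W Y X \<or> E W Y"
      using K_total[OF S(1,3,5)] WXY False K_cycle[OF S(5,3,1)] K_cycle[OF S(3,1,5)] by blast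
    moreover have "\<not> E Y X"
      using False E_sym[OF S(5,3)] by blast
    ultimately show ?thesis
      using lelt_same_interval_ordered[OF S(1,2,5,6,3) R(1,3) assms(11,10)] by blast
  qed
qed

end

lemma circ_succ_transfer:
  assumes "circ_succ S E K R" and g: "g ` S' = S"
    and E': "\<And>x y. x \<in> S' \<Longrightarrow> y \<in> S' \<Longrightarrow> E' x y \<longleftrightarrow> E (g x) (g y)"
    and R': "\<And>x y. x \<in> S' \<Longrightarrow> y \<in> S' \<Longrightarrow> R' x y \<longleftrightarrow> R (g x) (g y)"
    and K': "\<And>x y z. x \<in> S' \<Longrightarrow> y \<in> S' \<Longrightarrow> z \<in> S' \<Longrightarrow> K' x y z \<longleftrightarrow> K (g x) (g y) (g z)"
  shows "circ_succ S' E' K' R'"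
proof -
  interpret circ_succ S E K R by fact
  have gS: "x \<in> S' \<Longrightarrow> g x \<in> S" for x
    using g by blast
  show ?thesis
  proof (unfold_locales, simp_all only: E' R' K')
    fix X
    assume "X \<in> S'"
    then obtain Y where "Y \<in> S" "R (g X) Y"
      using R_total gS by blast
    then show "\<exists>Y\<in>S'. R' X Y"
      using g R' \<open>X \<in> S'\<close> by blast
  qed (use gS E_refl E_sym E_trans K_cong K_cycle K_asym K_trans K_total R_irrefl R_cong R_functional
      R_injective R_K R_preserves_K in \<open>meson\<close>)+
qed

lemma circ_succI:
  assumes "\<forall>X\<in>S. E X X" "\<forall>X\<in>S. \<forall>Y\<in>S. E X Y \<longrightarrow> E Y X"
    "\<forall>X\<in>S. \<forall>Y\<in>S. \<forall>Z\<in>S. E X Y \<longrightarrow> E Y Z \<longrightarrow> E X Z"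
    "\<forall>X\<in>S. \<not> R X X"
    "\<forall>X\<in>S. \<forall>X'\<in>S. \<forall>Y\<in>S. \<forall>Y'\<in>S. E X X' \<longrightarrow> E Y Y' \<longrightarrow> R X Y \<longrightarrow> R X' Y'"
    "\<forall>X\<in>S. \<forall>Y\<in>S. \<forall>Z\<in>S. R X Y \<longrightarrow> R X Z \<longrightarrow> E Y Z"
    "\<forall>X\<in>S. \<forall>Y\<in>S. \<forall>Z\<in>S. R X Z \<longrightarrow> R Y Z \<longrightarrow> E X Y"
    "\<forall>X\<in>S. \<forall>X'\<in>S. \<forall>Y\<in>S. \<forall>Y'\<in>S. \<forall>Z\<in>S. \<forall>Z'\<in>S.
      E X X' \<longrightarrow> E Y Y' \<longrightarrow> E Z Z' \<longrightarrow> K X Y Z \<longrightarrow> K X' Y' Z'"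
    "\<forall>X\<in>S. \<forall>Y\<in>S. \<forall>Z\<in>S. K X Y Z \<longrightarrow> K Y Z X"
    "\<forall>X\<in>S. \<forall>Y\<in>S. \<forall>Z\<in>S. K X Y Z \<longrightarrow> \<not> K Z Y X"
    "\<forall>X\<in>S. \<forall>Y\<in>S. \<forall>Z\<in>S. \<forall>W\<in>S. K X Y Z \<longrightarrow> K X Z W \<longrightarrow> K X Y W"
    "\<forall>X\<in>S. \<forall>Y\<in>S. \<forall>Z\<in>S. \<not> E X Y \<longrightarrow> \<not> E Y Z \<longrightarrow> \<not> E X Z \<longrightarrow> K X Y Z \<or> K Z Y X"
    "\<forall>X\<in>S. \<forall>Y\<in>S. \<forall>Z\<in>S. R X Y \<longrightarrow> R Y Z \<longrightarrow> K X Y Z"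
    "\<forall>X\<in>S. \<forall>X'\<in>S. \<forall>Y\<in>S. \<forall>Y'\<in>S. \<forall>Z\<in>S. \<forall>Z'\<in>S.
      R X X' \<longrightarrow> R Y Y' \<longrightarrow> R Z Z' \<longrightarrow> (K X Y Z \<longleftrightarrow> K X' Y' Z')"
    "\<forall>X\<in>S. \<exists>Y\<in>S. R X Y"
  shows "circ_succ S E K R"
  by unfold_locales (rule assms[rule_format]; assumption)+

definition ntuples :: "'a set \<Rightarrow> nat \<Rightarrow> 'a list set" where
  "ntuples A n = {x. distinct x \<and> length x = n \<and> set x \<subseteq> A}"

abbreviation Etup :: "(sym \<Rightarrow> 'a list \<Rightarrow> bool) \<Rightarrow> nat \<Rightarrow> 'a list \<Rightarrow> 'a list \<Rightarrow> bool" where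
  "Etup I n x y \<equiv> I (Esym n) (x @ y)"

abbreviation Rtup :: "(sym \<Rightarrow> 'a list \<Rightarrow> bool) \<Rightarrow> nat \<Rightarrow> 'a list \<Rightarrow> 'a list \<Rightarrow> bool" where
  "Rtup I n x y \<equiv> I (Rsym n) (x @ y)"

abbreviation Ktup :: "(sym \<Rightarrow> 'a list \<Rightarrow> bool) \<Rightarrow> nat \<Rightarrow> 'a list \<Rightarrow> 'a list \<Rightarrow> 'a list \<Rightarrow> bool" where
  "Ktup I n x y z \<equiv> I (Ksym n) (x @ y @ z)"

lemma circ_le_lt_tuples: "circ_le_lt (Etup I n) (Ktup I n) = le_lt I n"
  by (simp add: fun_eq_iff circ_le_lt_def le_lt_def)

text \<open>The hypothesis \<open>0 < n\<close> matters: \<open>nsets A 0\<close> also contains the infinite subsets of \<open>A\<close>.\<close>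

lemma set_ntuples: "0 < n \<Longrightarrow> set ` ntuples A n = nsets A n"
proof (intro equalityI subsetI)
  fix X
  assume "0 < n" "X \<in> nsets A n"
  then have "finite X"
    unfolding nsets_def using card_ge_0_finite by blast
  then obtain x where "set x = X" "distinct x"
    using finite_distinct_list by blast
  then show "X \<in> set ` ntuples A n"
    using \<open>X \<in> nsets A n\<close> distinct_card[of x] unfolding nsets_def ntuples_def by auto
qed (auto simp: ntuples_def nsets_def distinct_card)

lemma set_in_nsets: "x \<in> ntuples A n \<Longrightarrow> set x \<in> nsets A n"
  unfolding ntuples_def nsets_def by (simp add: distinct_card)

lemma block_ok_append2:
  assumes "bcount s = 2" and "length x = bsize s"
  shows "block_ok s (x @ y) \<longleftrightarrow> distinct x \<and> distinct y \<and> length y = bsize s"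
  using assms unfolding block_ok_def block_def by (auto simp: less_Suc_eq numeral_2_eq_2)

lemma block_ok_append3:
  assumes "bcount s = 3" and "length x = bsize s" "length y = bsize s" "length z = bsize s"
  shows "block_ok s (x @ y @ z) \<longleftrightarrow> distinct x \<and> distinct y \<and> distinct z"
  using assms unfolding block_ok_def block_def by (auto simp: less_Suc_eq numeral_3_eq_3)

lemma same_blocks_append2:
  assumes "bcount s = 2" and "length x = bsize s" "length y = bsize s"
    and "length x' = bsize s" "length y' = bsize s" and "set x = set x'" "set y = set y'"
  shows "same_blocks s (x @ y) (x' @ y')"
  using assms unfolding same_blocks_def block_def by (auto simp: less_Suc_eq numeral_2_eq_2)

lemma same_blocks_append3:
  assumes "bcount s = 3" and "length x = bsize s" "length y = bsize s" "length z = bsize s"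
    and "length x' = bsize s" "length y' = bsize s" "length z' = bsize s"
    and "set x = set x'" "set y = set y'" "set z = set z'"
  shows "same_blocks s (x @ y @ z) (x' @ y' @ z')"
  using assms unfolding same_blocks_def block_def by (auto simp: less_Suc_eq numeral_3_eq_3)

lemma Lstruct_block_ok: "Lstruct U I \<Longrightarrow> I s xs \<Longrightarrow> set xs \<subseteq> U \<and> 2 < bsize s \<and> block_ok s xs"
  unfolding Lstruct_def by blast

lemma Lstruct_same_blocks:
  "Lstruct U I \<Longrightarrow> block_ok s xs \<Longrightarrow> block_ok s ys \<Longrightarrow> same_blocks s xs ys \<Longrightarrow> I s xs = I s ys"
  unfolding Lstruct_def by blast

lemma Lstruct_Rtup_ntuples:
  assumes "Lstruct U I" and "Rtup I n x y" and "length x = n"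
  shows "x \<in> ntuples U n" "y \<in> ntuples U n" "2 < n"
  using Lstruct_block_ok[OF assms(1,2)] block_ok_append2[of "Rsym n" x y] assms(3)
  unfolding ntuples_def by auto

lemma rel2_iff:
  assumes L: "Lstruct U I" and s: "bcount s = 2"
    and "distinct x" "distinct y" "length x = bsize s" "length y = bsize s"
  shows "rel2 I s (set x) (set y) \<longleftrightarrow> I s (x @ y)"
proof
  assume "rel2 I s (set x) (set y)"
  then obtain x' y' where x'y': "distinct x'" "distinct y'" "set x' = set x" "set y' = set y"
      "I s (x' @ y')"
    unfolding rel2_def by blast
  then have "length x' = bsize s" "length y' = bsize s"
    using assms(3-6) by (metis distinct_card)+
  then show "I s (x @ y)"
    using Lstruct_same_blocks[OF L] block_ok_append2[OF s] same_blocks_append2[OF s] x'y' assms(3-6)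
    by metis
qed (use assms(3,4) in \<open>auto simp: rel2_def\<close>)

lemma rel3_iff:
  assumes L: "Lstruct U I" and s: "bcount s = 3"
    and "distinct x" "distinct y" "distinct z"
    and "length x = bsize s" "length y = bsize s" "length z = bsize s"
  shows "rel3 I s (set x) (set y) (set z) \<longleftrightarrow> I s (x @ y @ z)"
proof
  assume "rel3 I s (set x) (set y) (set z)"
  then obtain x' y' z' where x'y'z': "distinct x'" "distinct y'" "distinct z'"
      "set x' = set x" "set y' = set y" "set z' = set z" "I s (x' @ y' @ z')"
    unfolding rel3_def by blast
  then have "length x' = bsize s" "length y' = bsize s" "length z' = bsize s"
    using assms(3-8) by (metis distinct_card)+
  then show "I s (x @ y @ z)"
    using Lstruct_same_blocks[OF L] block_ok_append3[OF s] same_blocks_append3[OF s] x'y'z' assms(3-8)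
    by metis
qed (use assms(3-5) in \<open>auto simp: rel3_def\<close>)

lemma ntuples_rel2_iff:
  assumes "Lstruct U I" and "bcount s = 2" and "bsize s = n" and "x \<in> ntuples A n" "y \<in> ntuples A n"
  shows "rel2 I s (set x) (set y) \<longleftrightarrow> I s (x @ y)"
  using rel2_iff[OF assms(1,2)] assms(3-5) unfolding ntuples_def by auto

lemma ntuples_rel3_iff:
  assumes "Lstruct U I" and "bcount s = 3" and "bsize s = n"
    and "x \<in> ntuples A n" "y \<in> ntuples A n" "z \<in> ntuples A n"
  shows "rel3 I s (set x) (set y) (set z) \<longleftrightarrow> I s (x @ y @ z)"
  using rel3_iff[OF assms(1,2)] assms(3-6) unfolding ntuples_def by auto

section \<open>Strong and generic structures\<close>

lemma strong_in_Rcycle: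
  assumes "strong I A" and "2 < n" and "X \<in> nsets A n" "Y \<in> nsets A n" "rel2 I (Rsym n) X Y"
    and "Z \<in> nsets A n"
  shows "in_Rcycle I A n Z"
proof -
  let ?S = "nsets A n" and ?E = "rel2 I (Esym n)" and ?R = "rel2 I (Rsym n)"
  have K: "condK I A n"
    using assms(1,2) unfolding strong_def inK_def by blast
  have "\<forall>X\<in>?S. \<not> ?R X X"
    using K unfolding condK_def Let_def by (elim conjE) assumption
  moreover have "\<forall>X\<in>?S. \<forall>X'\<in>?S. \<forall>Y\<in>?S. \<forall>Y'\<in>?S. ?E X X' \<longrightarrow> ?E Y Y' \<longrightarrow> ?R X Y \<longrightarrow> ?R X' Y'"
    using K unfolding condK_def Let_def by (elim conjE) assumption
  ultimately have "\<not> (\<forall>V\<in>?S. \<forall>W\<in>?S. ?E V W)"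
    using assms(3-5) by blast
  then show ?thesis
    using assms(1,2,6) unfolding strong_def by blast
qed

lemma strong_nsets_circ_succ:
  assumes "strong I A" and "2 < n" and "X \<in> nsets A n" "Y \<in> nsets A n" "rel2 I (Rsym n) X Y"
  shows "circ_succ (nsets A n) (rel2 I (Esym n)) (rel3 I (Ksym n)) (rel2 I (Rsym n))"
proof -
  have K: "condK I A n"
    using assms(1,2) unfolding strong_def inK_def by blast
  have "\<forall>V\<in>nsets A n. \<exists>W\<in>nsets A n. rel2 I (Rsym n) V W"
  proof
    fix V
    assume "V \<in> nsets A n"
    then obtain cs where "length cs = n" "cs ! 0 = V" "set cs \<subseteq> nsets A n"
        "\<forall>i. i + 1 < n \<longrightarrow> rel2 I (Rsym n) (cs ! i) (cs ! (i + 1))"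
      using strong_in_Rcycle[OF assms] unfolding in_Rcycle_def by blast
    then show "\<exists>W\<in>nsets A n. rel2 I (Rsym n) V W"
      using \<open>2 < n\<close> by (intro bexI[of _ "cs ! 1"]) auto
  qed
  then show ?thesis
    using K unfolding condK_def Let_def by (elim conjE, intro circ_succI) assumption+
qed

lemma strong_ntuples_circ_succ:
  assumes L: "Lstruct U I" and "strong I A" and xy: "x \<in> ntuples A n" "y \<in> ntuples A n" "Rtup I n x y"
  shows "circ_succ (ntuples A n) (Etup I n) (Ktup I n) (Rtup I n)"
proof (rule circ_succ_transfer)
  have "2 < n"
    using Lstruct_Rtup_ntuples(3)[OF L xy(3)] xy(1) unfolding ntuples_def by simp
  then show "set ` ntuples A n = nsets A n"
    by (simp add: set_ntuples)
  have "rel2 I (Rsym n) (set x) (set y)"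
    using ntuples_rel2_iff[OF L] xy by simp
  then show "circ_succ (nsets A n) (rel2 I (Esym n)) (rel3 I (Ksym n)) (rel2 I (Rsym n))"
    using strong_nsets_circ_succ[OF assms(2) \<open>2 < n\<close>] set_in_nsets xy by blast
qed (simp_all add: ntuples_rel2_iff[OF L] ntuples_rel3_iff[OF L])

lemma strong_R_path_returns:
  assumes L: "Lstruct U I" and "strong I A" and xy: "x \<in> ntuples A n" "y \<in> ntuples A n" "Rtup I n x y"
    and p: "\<And>i. i \<le> n \<Longrightarrow> p i \<in> ntuples A n" "\<And>i. i < n \<Longrightarrow> Rtup I n (p i) (p (Suc i))"
  shows "Etup I n (p n) (p 0)"
proof -
  have "2 < n"
    using Lstruct_Rtup_ntuples(3)[OF L xy(3)] xy(1) unfolding ntuples_def by simp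
  have sets: "set (p i) \<in> nsets A n" if "i \<le> n" for i
    using set_in_nsets p(1) that by blast
  have R: "rel2 I (Rsym n) (set x) (set y)"
    using ntuples_rel2_iff[OF L] xy by simp
  interpret circ_succ "nsets A n" "rel2 I (Esym n)" "rel3 I (Ksym n)" "rel2 I (Rsym n)"
    using strong_nsets_circ_succ[OF assms(2) \<open>2 < n\<close> _ _ R] set_in_nsets xy by blast
  obtain cs where "length cs = n" "cs ! 0 = set (p 0)" "set cs \<subseteq> nsets A n"
      "\<forall>i. i + 1 < n \<longrightarrow> rel2 I (Rsym n) (cs ! i) (cs ! (i + 1))" "rel2 I (Rsym n) (cs ! (n - 1)) (cs ! 0)"
    using strong_in_Rcycle[OF assms(2) \<open>2 < n\<close> _ _ R sets[of 0]] set_in_nsets xy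
    unfolding in_Rcycle_def by blast
  moreover have "rel2 I (Rsym n) (set (p i)) (set (p (Suc i)))" if "i < n" for i
    using ntuples_rel2_iff[OF L, of "Rsym n" n "p i" A "p (Suc i)"] p that by simp
  ultimately have "rel2 I (Esym n) (set (p n)) (set (p 0))"
    using R_path_returns[of cs n "\<lambda>i. set (p i)"] \<open>2 < n\<close> sets by simp
  then show ?thesis
    using ntuples_rel2_iff[OF L, of "Esym n" n "p n" A "p 0"] p(1) by simp
qed

lemma generic_Lstruct: "generic U I \<Longrightarrow> Lstruct U I"
  unfolding generic_def by (elim conjE)

lemma generic_strong_chain:
  "generic U I \<Longrightarrow>
    \<exists>C :: nat \<Rightarrow> 'a set. (\<forall>k. C k \<subseteq> C (Suc k) \<and> C k \<subseteq> U \<and> strong I (C k)) \<and> (\<Union>k. C k) = U"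
  unfolding generic_def by (elim conjE)

lemma generic_strong_cover:
  assumes "generic U I" and "finite F" and "F \<subseteq> U"
  obtains A where "F \<subseteq> A" and "A \<subseteq> U" and "strong I A"
proof -
  obtain C :: "nat \<Rightarrow> 'a set" where C: "\<And>k. C k \<subseteq> C (Suc k)" "\<And>k. C k \<subseteq> U" "\<And>k. strong I (C k)"
      "(\<Union>k. C k) = U"
    using generic_strong_chain[OF assms(1)] by blast
  have "mono C"
    using C(1) by (simp add: mono_iff_le_Suc)
  then have "subset.chain UNIV (range C)"
    unfolding subset_chain_def by (metis monoD nat_le_linear rangeE subset_UNIV)
  then obtain B where "B \<in> range C" "F \<subseteq> B"
    using finite_subset_Union_chain[OF assms(2)] assms(3) C(4) by blast
  then show ?thesis
    using that C(2,3) by blast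
qed

lemma generic_strong_cover_tuples:
  assumes gen: "generic U I" and R: "Rtup I n x y" "length x = n" and F: "finite F" "F \<subseteq> U"
  obtains A where "F \<subseteq> A" "A \<subseteq> U" "strong I A" "x \<in> ntuples A n" "y \<in> ntuples A n"
    "circ_succ (ntuples A n) (Etup I n) (Ktup I n) (Rtup I n)"
proof -
  have L: "Lstruct U I"
    using generic_Lstruct[OF gen] .
  have xy: "x \<in> ntuples U n" "y \<in> ntuples U n"
    using Lstruct_Rtup_ntuples[OF L R] by simp_all
  obtain A where A: "F \<union> set x \<union> set y \<subseteq> A" "A \<subseteq> U" "strong I A"
    using generic_strong_cover[OF gen, of "F \<union> set x \<union> set y"] xy F unfolding ntuples_def by auto
  have xyA: "x \<in> ntuples A n" "y \<in> ntuples A n"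
    using xy A(1) unfolding ntuples_def by auto
  show ?thesis
    using that[OF _ A(2,3) xyA strong_ntuples_circ_succ[OF L A(3) xyA R(1)]] A(1) by blast
qed

lemma generic_Rtup_total:
  assumes gen: "generic U I" and R: "Rtup I n x y" "length x = n" and z: "z \<in> ntuples U n"
  obtains w where "w \<in> ntuples U n" and "Rtup I n z w"
proof -
  have "set z \<subseteq> U"
    using z unfolding ntuples_def by blast
  then obtain A where A: "set z \<subseteq> A" "A \<subseteq> U"
    and circ: "circ_succ (ntuples A n) (Etup I n) (Ktup I n) (Rtup I n)"
    using generic_strong_cover_tuples[OF gen R finite_set] by metis
  interpret circ_succ "ntuples A n" "Etup I n" "Ktup I n" "Rtup I n"
    by (fact circ)
  have "z \<in> ntuples A n"
    using z A(1) unfolding ntuples_def by blast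
  then obtain w where "w \<in> ntuples A n" "Rtup I n z w"
    using R_total by blast
  then show ?thesis
    using that A(2) unfolding ntuples_def by blast
qed

section \<open>Definability over an elementary substructure\<close>

definition Exs :: "nat \<Rightarrow> nat \<Rightarrow> fm \<Rightarrow> fm" where
  "Exs m k \<phi> = foldr Ex [m..<m + k] \<phi>"

definition upd_block :: "nat \<Rightarrow> 'a list \<Rightarrow> (nat \<Rightarrow> 'a) \<Rightarrow> nat \<Rightarrow> 'a" where
  "upd_block m ws v i = (if m \<le> i \<and> i < m + length ws then ws ! (i - m) else v i)"

lemma upd_block_Cons: "upd_block (Suc m) ws (v(m := w)) = upd_block m (w # ws) v"
  unfolding upd_block_def by (auto simp: fun_eq_iff nth_Cons' Suc_diff_Suc)

lemma sat_Exs: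
  "sat U I v (Exs m k \<phi>) \<longleftrightarrow> (\<exists>ws. length ws = k \<and> set ws \<subseteq> U \<and> sat U I (upd_block m ws v) \<phi>)"
proof (induction k arbitrary: m v)
  case 0
  have "upd_block m [] v = v"
    by (rule ext) (auto simp: upd_block_def)
  then show ?case
    by (simp add: Exs_def)
next
  case (Suc k)
  have "Exs m (Suc k) \<phi> = Ex m (Exs (Suc m) k \<phi>)"
    by (simp add: Exs_def upt_rec)
  then have "sat U I v (Exs m (Suc k) \<phi>) \<longleftrightarrow>
      (\<exists>w\<in>U. \<exists>ws. length ws = k \<and> set ws \<subseteq> U \<and> sat U I (upd_block m (w # ws) v) \<phi>)"
    by (simp only: sat.simps Suc.IH upd_block_Cons)
  also have "\<dots> \<longleftrightarrow> (\<exists>ws. length ws = Suc k \<and> set ws \<subseteq> U \<and> sat U I (upd_block m ws v) \<phi>)"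
    by (metis (no_types, lifting) Suc_length_conv insert_subset list.simps(15))
  finally show ?case .
qed

lemma map_upd_block_asg:
  "length x = m \<Longrightarrow> map (upd_block m ws (asg x v)) [0..<m + length ws] = x @ ws"
  by (rule nth_equalityI) (auto simp: upd_block_def asg_def nth_append)

lemma elem_sub_witness:
  assumes N: "elem_sub N U I" and "set x \<subseteq> N" "set y \<subseteq> U" "I s (x @ y)"
  obtains y' where "length y' = length y" "set y' \<subseteq> N" "I s (x @ y')"
proof -
  obtain n0 where "n0 \<in> N"
    using N unfolding elem_sub_def by blast
  define v where "v = asg x (\<lambda>_. n0)"
  have "range v \<subseteq> N"
    using \<open>n0 \<in> N\<close> \<open>set x \<subseteq> N\<close> by (auto simp: v_def asg_def)
  define \<phi> where "\<phi> = Exs (length x) (length y) (Atom s [0..<length x + length y])"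
  have "sat U I v \<phi>"
    unfolding \<phi>_def sat_Exs using assms(3,4) map_upd_block_asg[of x] by (auto simp: v_def)
  then have "sat N I v \<phi>"
    using N \<open>range v \<subseteq> N\<close> unfolding elem_sub_def by blast
  then obtain ws where "length ws = length y" "set ws \<subseteq> N"
      "I s (map (upd_block (length x) ws v) [0..<length x + length y])"
    unfolding \<phi>_def sat_Exs by auto
  then show ?thesis
    using that map_upd_block_asg[of x "length x" ws] by (simp add: v_def)
qed

text \<open>Having an \<open>R\<close>-successor is first-order, so \<open>N\<close> inherits it from \<open>M\<close>, and so does
  the existence of some \<open>R\<close>-related pair.\<close>

lemma elem_sub_R_path:
  assumes gen: "generic U I" and N: "elem_sub N U I" and R: "Rtup I n x y" "length x = n"
  obtains z where "\<And>k. z k \<in> ntuples N n" and "\<And>k. Rtup I n (z k) (z (Suc k))"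
proof -
  have L: "Lstruct U I"
    using generic_Lstruct[OF gen] .
  have "N \<subseteq> U"
    using N unfolding elem_sub_def by blast
  have N_total: "\<exists>w. w \<in> ntuples N n \<and> Rtup I n z w" if z: "z \<in> ntuples N n" for z
  proof -
    obtain w where "w \<in> ntuples U n" "Rtup I n z w"
      using generic_Rtup_total[OF gen R] z \<open>N \<subseteq> U\<close> unfolding ntuples_def by blast
    then obtain w' where "length w' = n" "set w' \<subseteq> N" "Rtup I n z w'"
      using elem_sub_witness[OF N, of z w] z unfolding ntuples_def by auto
    then show ?thesis
      using Lstruct_Rtup_ntuples(2)[OF L, of n z w'] z unfolding ntuples_def by auto
  qed
  have "\<exists>z0. z0 \<in> ntuples N n"
  proof -
    have "set (x @ y) \<subseteq> U"
      using Lstruct_block_ok[OF L R(1)] by blast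
    then obtain w where w: "length w = length (x @ y)" "set w \<subseteq> N" "I (Rsym n) w"
      using elem_sub_witness[OF N, of "[]" "x @ y"] R(1) by auto
    then have "Rtup I n (take n w) (drop n w)" "length (take n w) = n"
      using R(2) by simp_all
    then show ?thesis
      using Lstruct_Rtup_ntuples(1)[OF L] w(2) set_take_subset[of n w] unfolding ntuples_def by blast
  qed
  then show ?thesis
    using dependent_nat_choice[of "\<lambda>_ z. z \<in> ntuples N n" "\<lambda>_ z w. Rtup I n z w"] N_total that by blast
qed

lemma elem_sub_R_interval:
  assumes gen: "generic U I" and N: "elem_sub N U I" and R: "Rtup I n x y" "length x = n"
  obtains P Q where "P \<in> ntuples N n" "Q \<in> ntuples N n" "Rtup I n P Q" "le_lt I n P x Q"
proof -
  obtain z where z: "\<And>k. z k \<in> ntuples N n" "\<And>k. Rtup I n (z k) (z (Suc k))"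
    using elem_sub_R_path[OF gen N R] by blast
  have "(\<Union>k\<le>n. set (z k)) \<subseteq> U"
    using z(1) N unfolding ntuples_def elem_sub_def by blast
  then obtain A where A: "(\<Union>k\<le>n. set (z k)) \<subseteq> A" "strong I A" "x \<in> ntuples A n" "y \<in> ntuples A n"
    and circ: "circ_succ (ntuples A n) (Etup I n) (Ktup I n) (Rtup I n)"
    using generic_strong_cover_tuples[OF gen R] by (metis finite_UN_I finite_atMost finite_set)
  interpret circ_succ "ntuples A n" "Etup I n" "Ktup I n" "Rtup I n"
    rewrites "circ_le_lt (Etup I n) (Ktup I n) = le_lt I n"
    by (fact circ) (fact circ_le_lt_tuples)
  have L: "Lstruct U I"
    using generic_Lstruct[OF gen] .
  have zA: "z k \<in> ntuples A n" if "k \<le> n" for k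
    using z(1) A(1) that unfolding ntuples_def by blast
  have "2 < n"
    using Lstruct_Rtup_ntuples(3)[OF L R] .
  have "Etup I n (z n) (z 0)"
    using strong_R_path_returns[OF L A(2-4) R(1), of z] zA z(2) by blast
  moreover have "\<not> Etup I n (z 0) (z 1)"
    using R_not_E[OF zA zA z(2)] \<open>2 < n\<close> by simp
  ultimately obtain i where "i < n" "le_lt I n (z i) x (z (Suc i))"
    using lelt_cover[of n z x] zA A(3) \<open>2 < n\<close> by auto
  then show ?thesis
    using that z by blast
qed

text \<open>Variables below \<open>length a\<close> denote the entries of \<open>a\<close> (resp. \<open>b\<close>); the parameters
  \<open>P\<close> and \<open>Q\<close> are put at the variables from \<open>length a\<close> on.\<close>

lemma same_type_atom:
  assumes tp: "same_type U I N a b" and "N \<subseteq> U" "N \<noteq> {}" and "set P \<subseteq> N" "set Q \<subseteq> N"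
    and idx: "\<forall>i\<in>set idx. i < length a"
  shows "I s (P @ map ((!) a) idx @ Q) \<longleftrightarrow> I s (P @ map ((!) b) idx @ Q)"
proof -
  obtain n0 where "n0 \<in> N"
    using \<open>N \<noteq> {}\<close> by blast
  define L where "L = length a"
  have "length b = L"
    using tp unfolding same_type_def L_def by simp
  define v where "v = (\<lambda>j. asg (P @ Q) (\<lambda>_. n0) (j - L))"
  have "range v \<subseteq> N"
    using \<open>n0 \<in> N\<close> assms(4,5) by (auto simp: v_def asg_def nth_append)
  define \<phi> where "\<phi> = Atom s ([L..<L + length P] @ idx @ [L + length P..<L + length P + length Q])"
  have sat: "sat U I (asg c v) \<phi> \<longleftrightarrow> I s (P @ map ((!) c) idx @ Q)" if "length c = L" for c
  proof -
    have "map (asg c v) [L..<L + length P] = P" "map (asg c v) [L + length P..<L + length P + length Q] = Q"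
      by (auto intro!: nth_equalityI simp: that v_def asg_def nth_append)
    moreover have "map (asg c v) idx = map ((!) c) idx"
      using idx that unfolding L_def asg_def by auto
    ultimately show ?thesis
      unfolding \<phi>_def by (simp del: map_eq_conv)
  qed
  have "sat U I (asg a v) \<phi> \<longleftrightarrow> sat U I (asg b v) \<phi>"
    using tp \<open>range v \<subseteq> N\<close> \<open>N \<subseteq> U\<close> unfolding same_type_def by blast
  then show ?thesis
    using sat[of a] sat[of b] \<open>length b = L\<close> L_def by simp
qed

lemma same_type_le_lt:
  assumes "same_type U I N a b" and "N \<subseteq> U" "N \<noteq> {}" and "set P \<subseteq> N" "set Q \<subseteq> N"
    and "\<forall>i\<in>set idx. i < length a"
  shows "le_lt I n P (map ((!) a) idx) Q \<longleftrightarrow> le_lt I n P (map ((!) b) idx) Q"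
proof -
  have "I s (x @ map ((!) a) idx @ y) \<longleftrightarrow> I s (x @ map ((!) b) idx @ y)" if "set x \<subseteq> N" "set y \<subseteq> N"
    for s x y
    using same_type_atom[OF assms(1-3) that assms(6)] .
  from this[of P "[]"] this[of "[]" Q] this[of P Q] show ?thesis
    using assms(4,5) unfolding le_lt_def by simp
qed

theorem lemma2p3:
  fixes U N :: "'a set" and I :: "sym \<Rightarrow> 'a list \<Rightarrow> bool"
    and a b :: "'a list" and idx :: "nat list" and l :: nat
  assumes "generic U I"
    and "distinct a" and "set a \<subseteq> U" and "strong I (set a)"
    and "distinct b" and "set b \<subseteq> U" and "strong I (set b)"
    and "same_type U I {} a b"
    and "elem_sub N U I"
    and "same_type U I N a b"
    and "distinct idx" and "length idx = l" and "\<forall>i\<in>set idx. i < length a"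
  shows "\<forall>fa fb. I (Rsym l) (map ((!) a) idx @ fa) \<longrightarrow> I (Rsym l) (map ((!) b) idx @ fb) \<longrightarrow>
           le_lt I l (map ((!) a) idx) (map ((!) b) idx) fa \<or>
           le_lt I l (map ((!) b) idx) (map ((!) a) idx) fb"
proof (intro allI impI)
  fix fa fb
  let ?a' = "map ((!) a) idx" and ?b' = "map ((!) b) idx"
  assume Ra: "Rtup I l ?a' fa" and Rb: "Rtup I l ?b' fb"
  have N: "N \<subseteq> U" "N \<noteq> {}"
    using assms(9) unfolding elem_sub_def by blast+
  obtain P Q where PQ: "P \<in> ntuples N l" "Q \<in> ntuples N l" "Rtup I l P Q" "le_lt I l P ?a' Q"
    using elem_sub_R_interval[OF assms(1,9) Ra] assms(12) by auto
  then have "le_lt I l P ?b' Q"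
    using same_type_le_lt[OF assms(10) N _ _ assms(13)] unfolding ntuples_def by blast
  have tuples: "?b' \<in> ntuples U l" "fb \<in> ntuples U l"
    using Lstruct_Rtup_ntuples[OF generic_Lstruct[OF assms(1)] Rb] assms(12) by simp_all
  let ?F = "set P \<union> set Q \<union> set ?b' \<union> set fb"
  have "finite ?F" "?F \<subseteq> U" "length ?a' = l"
    using PQ(1,2) tuples N(1) assms(12) unfolding ntuples_def by auto
  then obtain A where A: "?F \<subseteq> A" "A \<subseteq> U" "strong I A" "?a' \<in> ntuples A l" "fa \<in> ntuples A l"
    and circ: "circ_succ (ntuples A l) (Etup I l) (Ktup I l) (Rtup I l)"
    using generic_strong_cover_tuples[OF assms(1) Ra] by metis
  interpret circ_succ "ntuples A l" "Etup I l" "Ktup I l" "Rtup I l"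
    rewrites "circ_le_lt (Etup I l) (Ktup I l) = le_lt I l"
    by (fact circ) (fact circ_le_lt_tuples)
  have in_A: "P \<in> ntuples A l" "Q \<in> ntuples A l" "?b' \<in> ntuples A l" "fb \<in> ntuples A l"
    using PQ(1,2) tuples A(1) unfolding ntuples_def by blast+
  show "le_lt I l ?a' ?b' fa \<or> le_lt I l ?b' ?a' fb"
    using lelt_same_interval[OF in_A(1,2) A(4,5) in_A(3,4) PQ(3) Ra Rb PQ(4) \<open>le_lt I l P ?b' Q\<close>] .
qed

end
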